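(* Let $M$ and $N$ be monoids with finite generating sets $X$ and $Y$ respectively, and suppose $(M,d_X)$ and $(N,d_Y)$ are quasi-isometric. Then $M$ (with respect to $X$) and $N$ (with respect to $Y$) have the same number of ends.
   Context: For a monoid $M$ generated by a finite set $X$, $d_X(x,y)=\inf\{|w|:w\in X^*,\ xw=y\}$ ($X^*$ the free monoid on $X$, $\inf\emptyset=\infty$). A map $f:(M,d_X)\to(N,d_Y)$ is a quasi-isometry if there are $1\le\lambda<\infty$, $0<\epsilon<\infty$, $0\le\mu<\infty$ with $\frac1\lambda d_X(x,y)-\epsilon\le d_Y(f(x),f(y))\le\lambda d_X(x,y)+\epsilon$ for all $x,y\in M$, and for every $n\in N$ some $x\in M$ with $\max(d_Y(n,f(x)),d_Y(f(x),n))\le\mu$. The right Cayley graph of $M$ with respect to $X$ is the directed graph with vertex set $M$ and an edge labelled $a$ from $m$ to $ma$ for each $m\in M$, $a\in X$. The number of ends of $M$ with respect to $X$ is the supremum, over all finite sets $F$ of vertices, of the number of infinite connected components of the graph obtained from the underlying undirected graph of the right Cayley graph by deleting $F$. *)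

theory Defs
  imports Main "HOL-Library.Extended_Real"
begin

text \<open>Monoids are modelled as types of class monoid_mult (the monoid is the whole type).
  Words over X are lists with entries in X, evaluated by prod_list.\<close>

definition generates :: "'a::monoid_mult set \<Rightarrow> bool" where
  "generates X \<longleftrightarrow> (\<forall>m::'a. \<exists>w. set w \<subseteq> X \<and> prod_list w = m)"

definition wdist :: "'a::monoid_mult set \<Rightarrow> 'a \<Rightarrow> 'a \<Rightarrow> enat" where
  "wdist X x y = Inf {enat (length w) | w. set w \<subseteq> X \<and> x * prod_list w = y}"

definition quasi_isometry ::
  "'a::monoid_mult set \<Rightarrow> 'b::monoid_mult set \<Rightarrow> ('a \<Rightarrow> 'b) \<Rightarrow> bool" where
  "quasi_isometry X Y f \<longleftrightarrow>
     (\<exists>lam eps mu :: real. 1 \<le> lam \<and> 0 < eps \<and> 0 \<le> mu \<and>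
       (\<forall>x y. ereal (1 / lam) * ereal_of_enat (wdist X x y) - ereal eps
                 \<le> ereal_of_enat (wdist Y (f x) (f y))
             \<and> ereal_of_enat (wdist Y (f x) (f y))
                 \<le> ereal lam * ereal_of_enat (wdist X x y) + ereal eps) \<and>
       (\<forall>n. \<exists>x. max (ereal_of_enat (wdist Y n (f x))) (ereal_of_enat (wdist Y (f x) n))
                  \<le> ereal mu))"

definition quasi_isometric :: "'a::monoid_mult set \<Rightarrow> 'b::monoid_mult set \<Rightarrow> bool" where
  "quasi_isometric X Y \<longleftrightarrow> (\<exists>f. quasi_isometry X Y f)"

text \<open>Underlying undirected graph of the right Cayley graph with the vertex set F deleted.\<close>
definition cayley_edges_minus :: "'a::monoid_mult set \<Rightarrow> 'a set \<Rightarrow> ('a \<times> 'a) set" where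
  "cayley_edges_minus X F =
     {(u, v). u \<notin> F \<and> v \<notin> F \<and> (\<exists>a\<in>X. v = u * a \<or> u = v * a)}"

definition components_minus :: "'a::monoid_mult set \<Rightarrow> 'a set \<Rightarrow> 'a set set" where
  "components_minus X F = {{v. (m, v) \<in> (cayley_edges_minus X F)\<^sup>*} | m. m \<notin> F}"

definition num_inf_components :: "'a::monoid_mult set \<Rightarrow> 'a set \<Rightarrow> enat" where
  "num_inf_components X F =
     (let S = {C \<in> components_minus X F. infinite C} in
      if finite S then enat (card S) else \<infinity>)"

definition num_ends :: "'a::monoid_mult set \<Rightarrow> enat" where
  "num_ends X = (SUP F \<in> {F :: 'a set. finite F}. num_inf_components X F)"

end

theory Submission
  imports Defs
begin

text \<open>A quasi-isometry \<open>f\<close> has a coarse inverse \<open>g\<close>, and both move generator steps by a bounded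
  number of steps. Deleting a finite set \<open>F\<close> from the Cayley graph of \<open>M\<close>, let \<open>F'\<close> be a bounded
  neighbourhood of \<open>f ` F\<close> and \<open>G \<supseteq> F\<close> a finite set outside of which \<open>f\<close> stays away from \<open>F'\<close>.
  Every infinite component of the graph minus \<open>F\<close> contains an infinite component of the graph
  minus \<open>G\<close>; \<open>f\<close> maps the latter into an infinite component of the graph of \<open>N\<close> minus \<open>F'\<close>,
  and pulling back along \<open>g\<close> shows that distinct components are sent to distinct ones. Hence
  the number of ends of \<open>M\<close> is at most that of \<open>N\<close>, and symmetry gives equality.\<close>

definition reach :: "'a::monoid_mult set \<Rightarrow> 'a \<Rightarrow> 'a \<Rightarrow> nat \<Rightarrow> bool" where
  "reach X x y r \<longleftrightarrow> (\<exists>w. set w \<subseteq> X \<and> length w \<le> r \<and> y = x * prod_list w)"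

lemma reach_refl: "reach X x x r"
  unfolding reach_def by (rule exI[of _ "[]"]) simp

lemma reach_mono: "reach X x y r \<Longrightarrow> r \<le> s \<Longrightarrow> reach X x y s"
  unfolding reach_def by (blast intro: order_trans)

lemma reach_trans:
  assumes "reach X x y r" and "reach X y z s"
  shows "reach X x z (r + s)"
proof -
  obtain v w where "set v \<subseteq> X" "length v \<le> r" "y = x * prod_list v"
    and "set w \<subseteq> X" "length w \<le> s" "z = y * prod_list w"
    using assms unfolding reach_def by blast
  then show ?thesis
    unfolding reach_def by (intro exI[of _ "v @ w"]) (auto simp: mult.assoc)
qed

lemma reach_generator: "a \<in> X \<Longrightarrow> reach X x (x * a) 1"
  unfolding reach_def by (intro exI[of _ "[a]"]) simp

lemma wdist_le_enat_iff: "wdist X x y \<le> enat r \<longleftrightarrow> reach X x y r"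
proof
  let ?S = "{enat (length w) | w. set w \<subseteq> X \<and> x * prod_list w = y}"
  assume le: "wdist X x y \<le> enat r"
  have "?S \<noteq> {}"
  proof
    assume "?S = {}"
    then have "wdist X x y = \<infinity>"
      unfolding wdist_def by (simp add: Inf_enat_def)
    then show False
      using le by simp
  qed
  then have "wdist X x y \<in> ?S"
    unfolding wdist_def Inf_enat_def if_not_P[OF \<open>?S \<noteq> {}\<close>]
    using LeastI_ex[of "\<lambda>z. z \<in> ?S"] by blast
  then show "reach X x y r"
    using le unfolding reach_def by auto
next
  assume "reach X x y r"
  then obtain w where "set w \<subseteq> X" "length w \<le> r" "y = x * prod_list w"
    unfolding reach_def by blast
  then have "wdist X x y \<le> enat (length w)"
    unfolding wdist_def by (intro Inf_lower) blast
  then show "wdist X x y \<le> enat r"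
    using \<open>length w \<le> r\<close> by (meson enat_ord_simps(1) order_trans)
qed

lemma reach_if_wdist_le_real:
  assumes "ereal_of_enat (wdist X x y) \<le> ereal c" and "c \<le> real r"
  shows "reach X x y r"
proof -
  have "ereal_of_enat (wdist X x y) \<le> ereal_of_enat (enat r)"
    using assms by (simp add: order_trans)
  then show ?thesis
    using wdist_le_enat_iff by (metis ereal_of_enat_le_iff)
qed

definition reach_ball :: "'a::monoid_mult set \<Rightarrow> 'a set \<Rightarrow> nat \<Rightarrow> 'a set" where
  "reach_ball X S r = {y. \<exists>x\<in>S. reach X x y r}"

lemma reach_ballI: "x \<in> S \<Longrightarrow> reach X x y r \<Longrightarrow> y \<in> reach_ball X S r"
  unfolding reach_ball_def by blast

lemma subset_reach_ball: "S \<subseteq> reach_ball X S r"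
  using reach_ballI reach_refl by fast

lemma finite_reach_ball:
  assumes "finite X" and "finite S"
  shows "finite (reach_ball X S r)"
proof -
  have "reach_ball X S r \<subseteq> (\<lambda>(x, w). x * prod_list w) ` (S \<times> {w. set w \<subseteq> X \<and> length w \<le> r})"
    unfolding reach_ball_def reach_def by force
  moreover have "finite (S \<times> {w. set w \<subseteq> X \<and> length w \<le> r})"
    using assms finite_lists_length_le by blast
  ultimately show ?thesis
    by (meson finite_surj)
qed

lemma reach_lipschitz:
  assumes step: "\<And>x a. a \<in> X \<Longrightarrow> reach Y (f x) (f (x * a)) K"
    and "reach X p q r"
  shows "reach Y (f p) (f q) (K * r)"
proof -
  obtain w where w: "set w \<subseteq> X" "length w \<le> r" "q = p * prod_list w"
    using \<open>reach X p q r\<close> unfolding reach_def by blast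
  have "reach Y (f p) (f (p * prod_list w)) (K * length w)"
    using w(1)
  proof (induction w arbitrary: p)
    case Nil
    then show ?case by (simp add: reach_refl)
  next
    case (Cons a w)
    have "reach Y (f p) (f (p * a * prod_list w)) (K + K * length w)"
      using step Cons by (auto intro: reach_trans)
    then show ?case
      by (simp add: mult.assoc)
  qed
  then show ?thesis
    using w reach_mono by (metis mult_le_mono2)
qed

lemma cayley_edges_minus_sym: "sym (cayley_edges_minus X F)"
  unfolding sym_def cayley_edges_minus_def by auto

lemma rtrancl_cayley_edges_minus_sym:
  "(x, y) \<in> (cayley_edges_minus X F)\<^sup>* \<Longrightarrow> (y, x) \<in> (cayley_edges_minus X F)\<^sup>*"
  using sym_rtrancl[OF cayley_edges_minus_sym] by (meson symD)

lemma rtrancl_cayley_edges_minus_notin: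
  "(p, q) \<in> (cayley_edges_minus X F)\<^sup>* \<Longrightarrow> q \<notin> F \<Longrightarrow> p \<notin> F"
  by (erule converse_rtranclE) (auto simp: cayley_edges_minus_def)

lemma rtrancl_cayley_edges_minus_word:
  assumes "set w \<subseteq> X" and "\<And>t. reach X t (x * prod_list w) (length w) \<Longrightarrow> t \<notin> F"
  shows "(x, x * prod_list w) \<in> (cayley_edges_minus X F)\<^sup>*"
  using assms
proof (induction w arbitrary: x)
  case Nil
  then show ?case by simp
next
  case (Cons a w)
  have end_eq: "x * prod_list (a # w) = x * a * prod_list w"
    by (simp add: mult.assoc)
  have reach_end: "reach X (x * a) (x * a * prod_list w) (length w)"
    using Cons.prems(1) unfolding reach_def by auto
  then have "reach X x (x * a * prod_list w) (length (a # w))"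
    using reach_trans[OF reach_generator] Cons.prems(1) by fastforce
  then have "x \<notin> F"
    using Cons.prems(2) end_eq by auto
  moreover have avoid: "t \<notin> F" if "reach X t (x * a * prod_list w) (length w)" for t
    using Cons.prems(2) end_eq reach_mono[OF that] by simp
  moreover have "x * a \<notin> F"
    using avoid reach_end by blast
  ultimately have "(x, x * a) \<in> cayley_edges_minus X F"
    using Cons.prems(1) unfolding cayley_edges_minus_def by auto
  moreover have "(x * a, x * a * prod_list w) \<in> (cayley_edges_minus X F)\<^sup>*"
    using Cons.IH Cons.prems(1) avoid by auto
  ultimately show ?case
    using end_eq by (simp add: converse_rtrancl_into_rtrancl)
qed

lemma rtrancl_cayley_edges_minus_if_reach:
  assumes "reach X x y r" and "\<And>t. reach X t y r \<Longrightarrow> t \<notin> F"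
  shows "(x, y) \<in> (cayley_edges_minus X F)\<^sup>*"
proof -
  obtain w where w: "set w \<subseteq> X" "length w \<le> r" "y = x * prod_list w"
    using assms(1) unfolding reach_def by blast
  then show ?thesis
    using rtrancl_cayley_edges_minus_word[of w X x F] assms(2) reach_mono by blast
qed

lemma rtrancl_cayley_edges_minus_map:
  assumes step: "\<And>x a. a \<in> X \<Longrightarrow> reach Y (f x) (f (x * a)) K"
    and avoid: "\<And>x t. x \<notin> G \<Longrightarrow> reach Y t (f x) K \<Longrightarrow> t \<notin> F"
    and "(p, q) \<in> (cayley_edges_minus X G)\<^sup>*"
  shows "(f p, f q) \<in> (cayley_edges_minus Y F)\<^sup>*"
  using \<open>(p, q) \<in> _\<close>
proof (induction rule: rtrancl_induct)
  case base
  then show ?case by simp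
next
  case (step q z)
  have edge: "(f u, f (u * a)) \<in> (cayley_edges_minus Y F)\<^sup>*" if "u * a \<notin> G" "a \<in> X" for u a
    using rtrancl_cayley_edges_minus_if_reach[OF assms(1)[OF that(2)]] avoid[OF that(1)] by blast
  from step.hyps(2) obtain a where "q \<notin> G" "z \<notin> G" "a \<in> X" "z = q * a \<or> q = z * a"
    unfolding cayley_edges_minus_def by blast
  then have "(f q, f z) \<in> (cayley_edges_minus Y F)\<^sup>*"
    using edge rtrancl_cayley_edges_minus_sym by metis
  then show ?case
    using step.IH by (rule rtrancl_trans[rotated])
qed

definition cayley_component :: "'a::monoid_mult set \<Rightarrow> 'a set \<Rightarrow> 'a \<Rightarrow> 'a set" where
  "cayley_component X F m = {v. (m, v) \<in> (cayley_edges_minus X F)\<^sup>*}"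

lemma components_minus_iff:
  "C \<in> components_minus X F \<longleftrightarrow> (\<exists>m. m \<notin> F \<and> C = cayley_component X F m)"
  unfolding components_minus_def cayley_component_def by auto

lemma cayley_component_self: "m \<in> cayley_component X F m"
  unfolding cayley_component_def by simp

lemma cayley_component_eq:
  "(p, q) \<in> (cayley_edges_minus X F)\<^sup>* \<Longrightarrow> cayley_component X F p = cayley_component X F q"
  unfolding cayley_component_def using rtrancl_cayley_edges_minus_sym by (blast intro: rtrancl_trans)

lemma cayley_component_eq_if_mem:
  "y \<in> cayley_component X F x \<Longrightarrow> cayley_component X F y = cayley_component X F x"
  using cayley_component_eq unfolding cayley_component_def by (metis mem_Collect_eq)

text \<open>Hence every component off \<open>G\<close> is that of \<open>1\<close> or of a neighbour of \<open>G\<close>.\<close>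
lemma cayley_path_last_exit:
  assumes "set w \<subseteq> X" and "x * prod_list w \<notin> G"
  shows "(x, x * prod_list w) \<in> (cayley_edges_minus X G)\<^sup>* \<or>
    (\<exists>u\<in>G. \<exists>a\<in>X. (u * a, x * prod_list w) \<in> (cayley_edges_minus X G)\<^sup>*)"
  using assms
proof (induction w arbitrary: x)
  case Nil
  then show ?case by simp
next
  case (Cons a w)
  have end_eq: "x * prod_list (a # w) = x * a * prod_list w"
    by (simp add: mult.assoc)
  from Cons.IH[of "x * a"] Cons.prems end_eq
  consider "(x * a, x * a * prod_list w) \<in> (cayley_edges_minus X G)\<^sup>*"
    | "\<exists>u\<in>G. \<exists>b\<in>X. (u * b, x * a * prod_list w) \<in> (cayley_edges_minus X G)\<^sup>*"
    by auto
  then show ?case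
  proof cases
    case 1
    show ?thesis
    proof (cases "x \<in> G")
      case True
      then show ?thesis using 1 end_eq Cons.prems by auto
    next
      case False
      have "x * a \<notin> G"
        using rtrancl_cayley_edges_minus_notin[OF 1] Cons.prems end_eq by simp
      then have "(x, x * a) \<in> cayley_edges_minus X G"
        using False Cons.prems unfolding cayley_edges_minus_def by auto
      then show ?thesis
        using 1 end_eq by (simp add: converse_rtrancl_into_rtrancl)
    qed
  next
    case 2
    then show ?thesis using end_eq by simp
  qed
qed

lemma finite_components_minus:
  assumes "finite X" and "generates X" and "finite G"
  shows "finite (components_minus X G)"
proof -
  have "components_minus X G \<subseteq>
    insert (cayley_component X G 1) ((\<lambda>(u, a). cayley_component X G (u * a)) ` (G \<times> X))"
  proof
    fix C
    assume "C \<in> components_minus X G"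
    then obtain m where m: "m \<notin> G" "C = cayley_component X G m"
      using components_minus_iff by blast
    obtain w where "set w \<subseteq> X" "prod_list w = m"
      using assms(2) unfolding generates_def by blast
    then have "(1, m) \<in> (cayley_edges_minus X G)\<^sup>* \<or>
      (\<exists>u\<in>G. \<exists>a\<in>X. (u * a, m) \<in> (cayley_edges_minus X G)\<^sup>*)"
      using cayley_path_last_exit[of w X 1 G] m by simp
    then show "C \<in> insert (cayley_component X G 1)
        ((\<lambda>(u, a). cayley_component X G (u * a)) ` (G \<times> X))"
      using m cayley_component_eq by fastforce
  qed
  then show ?thesis
    using assms by (meson finite_SigmaI finite_imageI finite_insert finite_subset)
qed

lemma infinite_component_refine:
  assumes "finite X" and "generates X" and "F \<subseteq> G" and "finite G"
    and "C \<in> components_minus X F" and "infinite C"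
  shows "\<exists>x\<in>C. x \<notin> G \<and> infinite (cayley_component X G x)"
proof (rule ccontr)
  assume no_infinite: "\<not> ?thesis"
  let ?Cs = "{cayley_component X G x | x. x \<in> C \<and> x \<notin> G}"
  have "C \<subseteq> G \<union> \<Union>?Cs"
    using cayley_component_self by blast
  moreover have "?Cs \<subseteq> components_minus X G"
    using components_minus_iff by blast
  then have "finite ?Cs"
    using finite_components_minus[OF assms(1,2,4)] finite_subset by blast
  moreover have "\<forall>S\<in>?Cs. finite S"
    using no_infinite by blast
  ultimately have "finite C"
    using assms(4) by (meson finite_Union finite_UnI finite_subset)
  then show False
    using assms(6) by blast
qed

lemma num_inf_components_le_if_map:
  assumes "finite X" and "generates X" and "F \<subseteq> G" and "finite G"
    and push: "\<And>p q. (p, q) \<in> (cayley_edges_minus X G)\<^sup>* \<Longrightarrow>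
      (f p, f q) \<in> (cayley_edges_minus Y F')\<^sup>*"
    and reflect: "\<And>x y. x \<notin> G \<Longrightarrow> y \<notin> G \<Longrightarrow> (f x, f y) \<in> (cayley_edges_minus Y F')\<^sup>* \<Longrightarrow>
      (x, y) \<in> (cayley_edges_minus X F)\<^sup>*"
    and outside: "\<And>x. x \<notin> G \<Longrightarrow> f x \<notin> F'"
    and fibres: "\<And>S. finite S \<Longrightarrow> finite (f -` S)"
  shows "num_inf_components X F \<le> num_inf_components Y F'"
proof -
  define SM where "SM = {C \<in> components_minus X F. infinite C}"
  define SN where "SN = {C \<in> components_minus Y F'. infinite C}"
  define rep where "rep C = (SOME x. x \<in> C \<and> x \<notin> G \<and> infinite (cayley_component X G x))" for C
  define phi where "phi C = cayley_component Y F' (f (rep C))" for C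
  have rep: "rep C \<in> C" "rep C \<notin> G" "infinite (cayley_component X G (rep C))" if "C \<in> SM" for C
  proof -
    have "\<exists>x. x \<in> C \<and> x \<notin> G \<and> infinite (cayley_component X G x)"
      using infinite_component_refine[OF assms(1-4)] that unfolding SM_def by blast
    from someI_ex[OF this] show "rep C \<in> C" "rep C \<notin> G" "infinite (cayley_component X G (rep C))"
      unfolding rep_def by auto
  qed
  have phi_SN: "phi C \<in> SN" if "C \<in> SM" for C
  proof -
    have "phi C \<in> components_minus Y F'"
      unfolding phi_def components_minus_iff using outside rep(2)[OF that] by blast
    moreover have "infinite (f ` cayley_component X G (rep C))"
    proof
      assume "finite (f ` cayley_component X G (rep C))"
      then have "finite (f -` f ` cayley_component X G (rep C))"
        by (rule fibres)
      then have "finite (cayley_component X G (rep C))"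
        by (rule finite_subset[rotated]) blast
      then show False
        using rep(3)[OF that] by contradiction
    qed
    moreover have "f ` cayley_component X G (rep C) \<subseteq> phi C"
      unfolding phi_def cayley_component_def using push by blast
    ultimately show ?thesis
      unfolding SN_def using infinite_super[of "f ` cayley_component X G (rep C)"] by auto
  qed
  have component_rep: "C = cayley_component X F (rep C)" if "C \<in> SM" for C
  proof -
    obtain m where C: "C = cayley_component X F m"
      using \<open>C \<in> SM\<close> unfolding SM_def components_minus_iff by blast
    then have "rep C \<in> cayley_component X F m"
      using rep(1)[OF \<open>C \<in> SM\<close>] by simp
    from cayley_component_eq_if_mem[OF this] show ?thesis
      using C by simp
  qed
  have "inj_on phi SM"
  proof (rule inj_onI)
    fix C1 C2
    assume C: "C1 \<in> SM" "C2 \<in> SM" "phi C1 = phi C2"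
    then have "f (rep C2) \<in> phi C1"
      using cayley_component_self unfolding phi_def by metis
    then have "(f (rep C1), f (rep C2)) \<in> (cayley_edges_minus Y F')\<^sup>*"
      unfolding phi_def cayley_component_def by simp
    then have "(rep C1, rep C2) \<in> (cayley_edges_minus X F)\<^sup>*"
      by (rule reflect[OF rep(2)[OF C(1)] rep(2)[OF C(2)]])
    then show "C1 = C2"
      using component_rep[OF C(1)] component_rep[OF C(2)] cayley_component_eq by metis
  qed
  moreover have "finite SM"
    unfolding SM_def using finite_components_minus[OF assms(1,2) finite_subset[OF assms(3,4)]] by simp
  ultimately show ?thesis
    unfolding num_inf_components_def Let_def SM_def[symmetric] SN_def[symmetric]
    using card_inj_on_le[of phi SM SN] phi_SN by auto
qed

definition coarse_inverses ::
  "'a::monoid_mult set \<Rightarrow> 'b::monoid_mult set \<Rightarrow> ('a \<Rightarrow> 'b) \<Rightarrow> ('b \<Rightarrow> 'a) \<Rightarrow> nat \<Rightarrow> bool" where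
  "coarse_inverses X Y f g K \<longleftrightarrow>
     (\<forall>x a. a \<in> X \<longrightarrow> reach Y (f x) (f (x * a)) K) \<and>
     (\<forall>y b. b \<in> Y \<longrightarrow> reach X (g y) (g (y * b)) K) \<and>
     (\<forall>x. reach X x (g (f x)) K \<and> reach X (g (f x)) x K) \<and>
     (\<forall>y. reach Y y (f (g y)) K \<and> reach Y (f (g y)) y K)"

lemma coarse_inverses_sym: "coarse_inverses X Y f g K \<Longrightarrow> coarse_inverses Y X g f K"
  unfolding coarse_inverses_def by blast

lemma coarse_inversesD:
  assumes "coarse_inverses X Y f g K"
  shows "a \<in> X \<Longrightarrow> reach Y (f x) (f (x * a)) K" and "b \<in> Y \<Longrightarrow> reach X (g y) (g (y * b)) K"
    and "reach X x (g (f x)) K" and "reach X (g (f x)) x K" and "reach Y (f (g y)) y K"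
  using assms unfolding coarse_inverses_def by simp_all

lemma finite_vimage_if_coarse_inverses:
  assumes "coarse_inverses X Y f g K" and "finite X" and "finite S"
  shows "finite (f -` S)"
proof -
  have "x \<in> reach_ball X (g ` S) K" if "f x \<in> S" for x
    using reach_ballI[OF imageI[of "f x" S g] coarse_inversesD(4)[OF assms(1)]] that by simp
  then have "f -` S \<subseteq> reach_ball X (g ` S) K"
    by blast
  then show ?thesis
    using finite_reach_ball[OF assms(2) finite_imageI[OF assms(3)]] by (rule finite_subset)
qed

text \<open>\<open>F'\<close> is chosen so that \<open>g\<close> maps nothing outside \<open>F'\<close> within \<open>K\<close> of \<open>F\<close>, and \<open>G\<close> so that
  no point outside \<open>G\<close> is within \<open>K\<close> of \<open>F'\<close> after applying \<open>f\<close>, or within \<open>K + K\<close> of \<open>F\<close>.\<close>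
lemma num_inf_components_le_if_coarse_inverses:
  assumes "coarse_inverses X Y f g K" and "finite X" and "generates X" and "finite Y"
    and "finite F"
  shows "num_inf_components X F \<le> num_inf_components Y (reach_ball Y (f ` F) (K * K + K))"
proof -
  note f_step = coarse_inversesD(1)[OF assms(1)] and g_step = coarse_inversesD(2)[OF assms(1)]
    and gf_to = coarse_inversesD(3)[OF assms(1)] and gf_from = coarse_inversesD(4)[OF assms(1)]
    and fg_from = coarse_inversesD(5)[OF assms(1)]
  note fibres = finite_vimage_if_coarse_inverses[OF assms(1,2)]
  define F' where "F' = reach_ball Y (f ` F) (K * K + K)"
  define G where "G = reach_ball X F (K + K) \<union> f -` reach_ball Y F' K"
  have "finite F'"
    unfolding F'_def using finite_reach_ball[OF assms(4) finite_imageI[OF assms(5)]] .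
  then have "finite G"
    unfolding G_def using finite_reach_ball[OF assms(2,5)] fibres finite_reach_ball[OF assms(4)]
    by simp
  have "F \<subseteq> G"
    unfolding G_def using subset_reach_ball by blast
  have outside: "f x \<notin> F'" if "x \<notin> G" for x
    using that subset_reach_ball unfolding G_def by blast
  have f_far_from_F': "t \<notin> F'" if "x \<notin> G" "reach Y t (f x) K" for x t
    using that reach_ballI[of t F' Y "f x" K] unfolding G_def by blast
  have g_near_F: "u \<in> F'" if "t \<in> F" "reach X t (g u) K" for t u
  proof -
    have "reach Y (f t) u (K * K + K)"
      using reach_trans[OF reach_lipschitz[OF f_step that(2)] fg_from] .
    then show ?thesis
      unfolding F'_def using reach_ballI[OF imageI[OF that(1)]] by blast
  qed
  have far_from_F: "t \<notin> F" if "x \<notin> G" "reach X t x (K + K)" for x t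
    using that reach_ballI[of t F X x "K + K"] unfolding G_def by blast
  have push: "(f p, f q) \<in> (cayley_edges_minus Y F')\<^sup>*"
    if "(p, q) \<in> (cayley_edges_minus X G)\<^sup>*" for p q
    using rtrancl_cayley_edges_minus_map[OF f_step f_far_from_F' that] .
  have reflect: "(x, y) \<in> (cayley_edges_minus X F)\<^sup>*"
    if "x \<notin> G" "y \<notin> G" "(f x, f y) \<in> (cayley_edges_minus Y F')\<^sup>*" for x y
  proof -
    have "(x, g (f x)) \<in> (cayley_edges_minus X F)\<^sup>*"
      using rtrancl_cayley_edges_minus_if_reach[OF gf_to]
        far_from_F[OF that(1) reach_trans[OF _ gf_from]]
      by blast
    moreover have "(g (f x), g (f y)) \<in> (cayley_edges_minus X F)\<^sup>*"
      using rtrancl_cayley_edges_minus_map[OF g_step _ that(3)] g_near_F by blast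
    moreover have "(g (f y), y) \<in> (cayley_edges_minus X F)\<^sup>*"
      using rtrancl_cayley_edges_minus_if_reach[OF gf_from] far_from_F[OF that(2) reach_mono] by simp
    ultimately show ?thesis
      by (meson rtrancl_trans)
  qed
  show ?thesis
    unfolding F'_def[symmetric]
    by (rule num_inf_components_le_if_map[OF assms(2,3) \<open>F \<subseteq> G\<close> \<open>finite G\<close> push reflect
          outside fibres])
qed

lemma num_ends_le_if_coarse_inverses:
  assumes "coarse_inverses X Y f g K" and "finite X" and "generates X" and "finite Y"
  shows "num_ends X \<le> num_ends Y"
  unfolding num_ends_def
proof (rule SUP_mono)
  fix F :: "'a set"
  assume "F \<in> {F. finite F}"
  then show "\<exists>F'\<in>{F :: 'b set. finite F}. num_inf_components X F \<le> num_inf_components Y F'"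
    using num_inf_components_le_if_coarse_inverses[OF assms, of F]
      finite_reach_ball[OF assms(4) finite_imageI, of F] by blast
qed

lemma quasi_isometry_reach_bounds:
  assumes "quasi_isometry X Y f"
  obtains L where "\<And>x y r. reach X x y r \<Longrightarrow> reach Y (f x) (f y) (L * r + L)"
    and "\<And>x y r. reach Y (f x) (f y) r \<Longrightarrow> reach X x y (L * r + L)"
    and "\<And>y. \<exists>x. reach Y y (f x) L \<and> reach Y (f x) y L"
proof -
  obtain lam eps mu :: real where lam: "1 \<le> lam" and eps: "0 < eps" and mu: "0 \<le> mu"
    and qi: "\<And>x y. ereal (1 / lam) * ereal_of_enat (wdist X x y) - ereal eps
                 \<le> ereal_of_enat (wdist Y (f x) (f y))
             \<and> ereal_of_enat (wdist Y (f x) (f y))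
                 \<le> ereal lam * ereal_of_enat (wdist X x y) + ereal eps"
    and dense: "\<And>y. \<exists>x. max (ereal_of_enat (wdist Y y (f x))) (ereal_of_enat (wdist Y (f x) y))
                  \<le> ereal mu"
    using assms unfolding quasi_isometry_def by blast
  define L where "L = nat \<lceil>lam * (1 + eps + mu)\<rceil>"
  have "lam * (1 + eps + mu) \<le> real L"
    unfolding L_def by (rule real_nat_ceiling_ge)
  moreover have "0 \<le> lam * eps" "mu \<le> lam * mu"
    using lam eps mu mult_right_mono[of 1 lam mu] by simp_all
  ultimately have L: "lam \<le> real L" "lam * eps \<le> real L" "mu \<le> real L" "eps \<le> real L"
    using lam eps mu mult_right_mono[of 1 lam eps] unfolding distrib_left mult_1_right by linarith+
  show ?thesis
  proof
    fix x y r
    assume "reach X x y r"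
    then obtain k where k: "wdist X x y = enat k" "k \<le> r"
      using wdist_le_enat_iff by (metis enat_ile enat_ord_simps(1))
    have "ereal_of_enat (wdist Y (f x) (f y)) \<le> ereal (lam * real k + eps)"
      using qi[of x y] k(1) by simp
    moreover have "lam * real k \<le> real L * real r"
      using L(1) lam k(2) by (intro mult_mono) auto
    then have "lam * real k + eps \<le> real (L * r + L)"
      using L(4) by simp
    ultimately show "reach Y (f x) (f y) (L * r + L)"
      by (rule reach_if_wdist_le_real)
  next
    fix x y r
    assume "reach Y (f x) (f y) r"
    then obtain k where k: "wdist Y (f x) (f y) = enat k" "k \<le> r"
      using wdist_le_enat_iff by (metis enat_ile enat_ord_simps(1))
    have lower: "ereal (1 / lam) * ereal_of_enat (wdist X x y) - ereal eps \<le> ereal (real k)"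
      using qi[of x y] k(1) by simp
    then obtain j where j: "wdist X x y = enat j"
      using lam by (cases "wdist X x y") auto
    have "real j \<le> lam * (real k + eps)"
      using lower lam j by (simp add: field_simps)
    also have "\<dots> \<le> real (L * r + L)"
      using L k(2) lam mult_mono[of lam "real L" "real k" "real r"] by (simp add: distrib_left)
    finally have "real j \<le> real (L * r + L)" .
    then show "reach X x y (L * r + L)"
      using reach_if_wdist_le_real[of X x y "real j" "L * r + L"] j by simp
  next
    fix y
    obtain x where "max (ereal_of_enat (wdist Y y (f x))) (ereal_of_enat (wdist Y (f x) y)) \<le> ereal mu"
      using dense by blast
    then show "\<exists>x. reach Y y (f x) L \<and> reach Y (f x) y L"
      using reach_if_wdist_le_real L(3) by (metis max.bounded_iff)
  qed
qed

lemma quasi_isometry_coarse_inverses: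
  assumes "quasi_isometry X Y f"
  obtains g K where "coarse_inverses X Y f g K"
proof -
  obtain L where upper: "\<And>x y r. reach X x y r \<Longrightarrow> reach Y (f x) (f y) (L * r + L)"
    and lower: "\<And>x y r. reach Y (f x) (f y) r \<Longrightarrow> reach X x y (L * r + L)"
    and dense: "\<And>y. \<exists>x. reach Y y (f x) L \<and> reach Y (f x) y L"
    using quasi_isometry_reach_bounds[OF assms] by blast
  define g where "g y = (SOME x. reach Y y (f x) L \<and> reach Y (f x) y L)" for y
  have g: "reach Y y (f (g y)) L" "reach Y (f (g y)) y L" for y
    unfolding g_def using someI_ex[OF dense] by blast+
  define K where "K = L * (L + 1 + L) + L"
  have "L * 1 + L \<le> K" "L * L + L \<le> K" "L \<le> K"
    unfolding K_def by (simp_all add: algebra_simps)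
  moreover have "reach X (g y) (g (y * b)) K" if "b \<in> Y" for y b
    using lower reach_trans[OF reach_trans[OF g(2) reach_generator[OF that]] g(1)]
    unfolding K_def by blast
  ultimately have "coarse_inverses X Y f g K"
    unfolding coarse_inverses_def
    using upper[OF reach_generator] lower[OF g(1)] lower[OF g(2)] g reach_mono by meson
  then show ?thesis ..
qed

theorem theorem7p2:
  fixes X :: "'a::monoid_mult set" and Y :: "'b::monoid_mult set"
  assumes "finite X" and "generates X"
    and "finite Y" and "generates Y"
    and "quasi_isometric X Y"
  shows "num_ends X = num_ends Y"
proof -
  obtain f where "quasi_isometry X Y f"
    using assms(5) unfolding quasi_isometric_def by blast
  then obtain g K where "coarse_inverses X Y f g K"
    by (rule quasi_isometry_coarse_inverses)
  then have "num_ends X \<le> num_ends Y" and "num_ends Y \<le> num_ends X"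
    using num_ends_le_if_coarse_inverses coarse_inverses_sym assms(1-4) by blast+
  then show ?thesis
    by (rule antisym)
qed

end
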